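(* Let $S_n(t)=\sum_{\pi\in\mathfrak{S}_n(2413,3142)}t^{\mathrm{des}(\pi)}$ for $n\ge1$. For $n\geq2$, $$S_n(t)=(1+t)S_{n-1}(t)+t\sum_{j=1}^{n-2}S_j(t)\biggl(S_{n-j-1}(t)+\sum_{i=1}^{n-j-1}S_i(t)S_{n-j-i}(t)\biggr).$$ Equivalently, $S(t,z):=\sum_{n\geq1}S_n(t)z^n$ satisfies $$S(t,z)=z+(1+t)zS(t,z)+tzS^2(t,z)+tS^3(t,z).$$
   Context: $\mathfrak{S}_n(2413,3142)$ is the set of permutations of $[n]$ avoiding the patterns $2413$ and $3142$ (no subsequence has the same relative order as $2413$ or $3142$); $\mathrm{des}(\pi)=\#\{i\in[n-1]:\pi_i>\pi_{i+1}\}$. *)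

theory Defs
  imports "HOL-Computational_Algebra.Polynomial" "HOL-Computational_Algebra.Formal_Power_Series"
begin

(* permutations of [n] in one-line notation: lists pi with pi ! (i-1) = pi_i *)
definition perms :: "nat \<Rightarrow> nat list set" where
  "perms n = {xs. distinct xs \<and> set xs = {1..n}}"

definition contains :: "nat list \<Rightarrow> nat list \<Rightarrow> bool" where
  "contains xs p \<longleftrightarrow> (\<exists>idx :: nat list. length idx = length p \<and> sorted_wrt (<) idx
      \<and> (\<forall>j\<in>set idx. j < length xs)
      \<and> (\<forall>a<length p. \<forall>b<length p. (xs ! (idx ! a) < xs ! (idx ! b)) \<longleftrightarrow> (p ! a < p ! b)))"

definition avoid_perms :: "nat \<Rightarrow> nat list set" where
  "avoid_perms n = {xs \<in> perms n. \<not> contains xs [2,4,1,3] \<and> \<not> contains xs [3,1,4,2]}"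

definition des :: "nat list \<Rightarrow> nat" where
  "des xs = card {i. i + 1 < length xs \<and> xs ! i > xs ! (i + 1)}"

definition S :: "nat \<Rightarrow> int poly" where
  "S n = (\<Sum>xs\<in>avoid_perms n. monom 1 (des xs))"

definition Sgf :: "int poly fps" where
  "Sgf = Abs_fps (\<lambda>n. if n = 0 then 0 else S n)"

end

theory Submission
  imports Defs
begin

text \<open>
  A permutation avoiding 2413 and 3142 (a separable permutation) of length at least 2 is either
  a direct sum or a skew sum, never both. Cutting a direct sum after its shortest prefix that is
  itself a block makes the decomposition unique: with \<open>P, M\<close> the descent polynomials of
  direct and skew sums, and \<open>Q, R\<close> those of direct and skew indecomposables, one gets
  \<open>P = Q S\<close> and \<open>M = t R S\<close>, the factor \<open>t\<close> recording the descent at the junction of a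
  skew sum. Complementation exchanges the two kinds of sums and turns descents into ascents, so
  the skew case follows from the direct one. Since an indecomposable permutation of length at
  least 2 of one kind is a sum of the other kind, \<open>Q = z + M\<close>, \<open>R = z + P\<close> and
  \<open>S = z + P + M\<close>; eliminating \<open>P, M, Q, R\<close> gives the cubic equation, and comparing
  coefficients gives the recurrence.
\<close>

unbundle fps_syntax

text \<open>An occurrence of 3142 for the reversed order \<open>(>)\<close> is an occurrence of 2413.\<close>

definition contains_3142 :: "(nat \<Rightarrow> nat \<Rightarrow> bool) \<Rightarrow> nat list \<Rightarrow> bool" where
  "contains_3142 R xs \<longleftrightarrow> (\<exists>i j k l. i < j \<and> j < k \<and> k < l \<and> l < length xs \<and>
     R (xs ! j) (xs ! l) \<and> R (xs ! l) (xs ! i) \<and> R (xs ! i) (xs ! k))"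

lemma contains_length_4_iff:
  "contains xs [p0, p1, p2, p3] \<longleftrightarrow> (\<exists>i j k l. i < j \<and> j < k \<and> k < l \<and> l < length xs \<and>
     (\<forall>a<4. \<forall>b<4. xs ! ([i,j,k,l] ! a) < xs ! ([i,j,k,l] ! b) \<longleftrightarrow>
        [p0, p1, p2, p3] ! a < [p0, p1, p2, p3] ! b))"
    (is "_ \<longleftrightarrow> (\<exists>i j k l. ?sorted i j k l \<and> ?order i j k l)")
proof
  have "length [p0, p1, p2, p3] = 4" by simp
  moreover assume "contains xs [p0, p1, p2, p3]"
  ultimately obtain idx where len: "length idx = 4" and sorted: "sorted_wrt (<) idx"
    and bounded: "\<forall>j\<in>set idx. j < length xs"
    and order: "\<forall>a<4. \<forall>b<4. xs ! (idx ! a) < xs ! (idx ! b) \<longleftrightarrow>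
        [p0, p1, p2, p3] ! a < [p0, p1, p2, p3] ! b"
    unfolding contains_def by metis
  have "idx = [idx!0, idx!1, idx!2, idx!3]"
    using len by (simp add: numeral_eq_Suc length_Suc_conv, metis nth_Cons_0 nth_Cons_Suc)
  then show "\<exists>i j k l. ?sorted i j k l \<and> ?order i j k l"
    using sorted len bounded order
    by (intro exI[of _ "idx!0"] exI[of _ "idx!1"] exI[of _ "idx!2"] exI[of _ "idx!3"])
       (auto simp: sorted_wrt_iff_nth_less)
next
  assume "\<exists>i j k l. ?sorted i j k l \<and> ?order i j k l"
  then obtain i j k l where "?sorted i j k l" "?order i j k l"
    by blast
  then show "contains xs [p0, p1, p2, p3]"
    unfolding contains_def by (intro exI[of _ "[i,j,k,l]"]) auto
qed

lemma all_less_4: "(\<forall>a<(4::nat). P a) \<longleftrightarrow> P 0 \<and> P 1 \<and> P 2 \<and> P 3"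
  by (auto simp: numeral_eq_Suc less_Suc_eq)

lemma contains_3142_iff: "contains xs [3,1,4,2] \<longleftrightarrow> contains_3142 (<) xs"
proof -
  have "(\<forall>a<4. \<forall>b<4. xs ! ([i,j,k,l] ! a) < xs ! ([i,j,k,l] ! b) \<longleftrightarrow> [3,1,4,2::nat] ! a < [3,1,4,2] ! b)
      \<longleftrightarrow> xs ! j < xs ! l \<and> xs ! l < xs ! i \<and> xs ! i < xs ! k" for i j k l
    unfolding all_less_4 by simp linarith
  then show ?thesis
    unfolding contains_length_4_iff contains_3142_def by simp
qed

lemma contains_2413_iff: "contains xs [2,4,1,3] \<longleftrightarrow> contains_3142 (>) xs"
proof -
  have "(\<forall>a<4. \<forall>b<4. xs ! ([i,j,k,l] ! a) < xs ! ([i,j,k,l] ! b) \<longleftrightarrow> [2,4,1,3::nat] ! a < [2,4,1,3] ! b)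
      \<longleftrightarrow> xs ! l < xs ! j \<and> xs ! i < xs ! l \<and> xs ! k < xs ! i" for i j k l
    unfolding all_less_4 by simp linarith
  then show ?thesis
    unfolding contains_length_4_iff contains_3142_def by simp
qed

definition separable :: "nat list \<Rightarrow> bool" where
  "separable xs \<longleftrightarrow> \<not> contains_3142 (<) xs \<and> \<not> contains_3142 (>) xs"

lemma avoid_perms_eq: "avoid_perms n = {xs \<in> perms n. separable xs}"
  unfolding avoid_perms_def separable_def contains_3142_iff contains_2413_iff by blast

lemma contains_3142_take:
  assumes "contains_3142 R (take m xs)"
  shows "contains_3142 R xs"
proof -
  obtain i j k l where "i < j" "j < k" "k < l" "l < length (take m xs)"
    "R (take m xs ! j) (take m xs ! l)" "R (take m xs ! l) (take m xs ! i)"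
    "R (take m xs ! i) (take m xs ! k)"
    using assms unfolding contains_3142_def by blast
  then show ?thesis
    unfolding contains_3142_def by (intro exI[of _ i] exI[of _ j] exI[of _ k] exI[of _ l]) auto
qed

lemma contains_3142_drop:
  assumes "contains_3142 R (drop m xs)"
  shows "contains_3142 R xs"
proof -
  obtain i j k l where "i < j" "j < k" "k < l" "l < length (drop m xs)"
    "R (drop m xs ! j) (drop m xs ! l)" "R (drop m xs ! l) (drop m xs ! i)"
    "R (drop m xs ! i) (drop m xs ! k)"
    using assms unfolding contains_3142_def by blast
  then show ?thesis
    unfolding contains_3142_def
    by (intro exI[of _ "m + i"] exI[of _ "m + j"] exI[of _ "m + k"] exI[of _ "m + l"]) auto
qed

lemma separable_take: "separable xs \<Longrightarrow> separable (take m xs)"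
  unfolding separable_def using contains_3142_take by blast

lemma separable_drop: "separable xs \<Longrightarrow> separable (drop m xs)"
  unfolding separable_def using contains_3142_drop by blast

lemma contains_3142_map:
  assumes "\<forall>a\<in>set xs. \<forall>b\<in>set xs. R (f a) (f b) \<longleftrightarrow> R' a b"
  shows "contains_3142 R (map f xs) \<longleftrightarrow> contains_3142 R' xs"
proof -
  have iff: "R (f (xs ! a)) (f (xs ! b)) \<longleftrightarrow> R' (xs ! a) (xs ! b)"
    if "a < length xs" "b < length xs" for a b
    using assms that by simp
  show ?thesis
    unfolding contains_3142_def length_map by (intro ex_cong1) (auto simp: iff)
qed

lemma separable_map_mono:
  assumes "\<forall>a\<in>set xs. \<forall>b\<in>set xs. f a < f b \<longleftrightarrow> a < b"
  shows "separable (map f xs) \<longleftrightarrow> separable xs"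
proof -
  have "contains_3142 (<) (map f xs) \<longleftrightarrow> contains_3142 (<) xs"
    "contains_3142 (>) (map f xs) \<longleftrightarrow> contains_3142 (>) xs"
    by (rule contains_3142_map; use assms in auto)+
  then show ?thesis unfolding separable_def by simp
qed

lemma separable_map_antimono:
  assumes "\<forall>a\<in>set xs. \<forall>b\<in>set xs. f a < f b \<longleftrightarrow> b < a"
  shows "separable (map f xs) \<longleftrightarrow> separable xs"
proof -
  have "contains_3142 (<) (map f xs) \<longleftrightarrow> contains_3142 (>) xs"
    "contains_3142 (>) (map f xs) \<longleftrightarrow> contains_3142 (<) xs"
    by (rule contains_3142_map; use assms in auto)+
  then show ?thesis unfolding separable_def by blast
qed

lemma contains_3142_append:
  assumes "contains_3142 R (xs @ ys)" and R: "R = (<) \<or> R = (>)"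
    and less: "\<forall>a\<in>set xs. \<forall>b\<in>set ys. a < b"
  shows "contains_3142 R xs \<or> contains_3142 R ys"
proof -
  obtain i j k l where idx: "i < j" "j < k" "k < l" "l < length (xs @ ys)"
    and pat: "R ((xs @ ys) ! j) ((xs @ ys) ! l)" "R ((xs @ ys) ! l) ((xs @ ys) ! i)"
      "R ((xs @ ys) ! i) ((xs @ ys) ! k)"
    using assms(1) unfolding contains_3142_def by blast
  let ?n = "length xs"
  have lt: "(xs @ ys) ! p < (xs @ ys) ! q" if "p < ?n" "?n \<le> q" "q < length (xs @ ys)" for p q
    using less that by (auto simp: nth_append)
  consider "l < ?n" | "?n \<le> i" | "i < ?n" "?n \<le> j" | "j < ?n" "?n \<le> k" | "k < ?n" "?n \<le> l"
    by linarith
  then show ?thesis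
  proof cases
    case 1
    then have "contains_3142 R xs" unfolding contains_3142_def using idx pat
      by (intro exI[of _ i] exI[of _ j] exI[of _ k] exI[of _ l]) (auto simp: nth_append)
    then show ?thesis ..
  next
    case 2
    then have "contains_3142 R ys" unfolding contains_3142_def using idx pat
      by (intro exI[of _ "i - ?n"] exI[of _ "j - ?n"] exI[of _ "k - ?n"] exI[of _ "l - ?n"])
         (auto simp: nth_append)
    then show ?thesis ..
  next
    case 3
    with R pat idx lt[of i l] lt[of i k] show ?thesis by auto
  next
    case 4
    with R pat idx lt[of i l] lt[of j l] show ?thesis by auto
  next
    case 5
    with R pat idx lt[of i l] lt[of j l] show ?thesis by auto
  qed
qed

lemma separable_append:
  assumes "separable xs" "separable ys" "\<forall>a\<in>set xs. \<forall>b\<in>set ys. a < b"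
  shows "separable (xs @ ys)"
  using assms contains_3142_append unfolding separable_def by blast

text \<open>\<open>splits_at (<) xs k\<close>: \<open>xs\<close> is the direct sum of its first \<open>k\<close> entries and the rest;
  \<open>splits_at (>) xs k\<close>: the skew sum.\<close>

definition splits_at :: "(nat \<Rightarrow> nat \<Rightarrow> bool) \<Rightarrow> nat list \<Rightarrow> nat \<Rightarrow> bool" where
  "splits_at R xs k \<longleftrightarrow> 0 < k \<and> k < length xs \<and>
     (\<forall>i<k. \<forall>j. k \<le> j \<and> j < length xs \<longrightarrow> R (xs ! i) (xs ! j))"

lemma snoc_comparable:
  fixes ys :: "nat list"
  assumes "R = (<) \<or> R = (>)" "distinct (ys @ [x])" "i < length ys"
  shows "R (ys ! i) x \<or> R x (ys ! i)"
proof -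
  have "ys ! i \<noteq> x"
    using assms(2) nth_mem[OF assms(3)] by auto
  then show ?thesis
    using assms(1) by auto
qed

text \<open>The new split point is the first position before \<open>k\<close> whose entry lies \<open>R\<close>-above \<open>x\<close>:
  an entry \<open>R\<close>-below \<open>x\<close> between it and \<open>k\<close> would form a 3142 together with the entry at \<open>k\<close>
  and \<open>x\<close>.\<close>

lemma splits_at_snoc_interleaved:
  assumes R: "R = (<) \<or> R = (>)"
    and distinct: "distinct (ys @ [x])" and avoids: "\<not> contains_3142 R (ys @ [x])"
    and split: "splits_at R ys k"
    and above: "i0 < k" "R x (ys ! i0)" and below: "i1 < k" "R (ys ! i1) x"
  shows "\<exists>k'. splits_at R (ys @ [x]) k'"
proof -
  let ?n = "length ys"
  have k: "k < ?n"
    and blocks: "\<And>i j. i < k \<Longrightarrow> k \<le> j \<Longrightarrow> j < ?n \<Longrightarrow> R (ys ! i) (ys ! j)"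
    using split unfolding splits_at_def by auto
  have total: "R (ys ! i) x \<or> R x (ys ! i)" if "i < ?n" for i
    using snoc_comparable[OF R distinct that] .
  define k' where "k' = (LEAST i. i < k \<and> R x (ys ! i))"
  have k': "k' < k" "R x (ys ! k')"
    using LeastI[of "\<lambda>i. i < k \<and> R x (ys ! i)", OF conjI, OF above] unfolding k'_def by auto
  have before: "R (ys ! i) x" if "i < k'" for i
  proof -
    have "\<not> (i < k \<and> R x (ys ! i))"
      using not_less_Least[of i "\<lambda>i. i < k \<and> R x (ys ! i)"] that unfolding k'_def by blast
    then show ?thesis using total[of i] that k k' by auto
  qed
  have after: "R x (ys ! j)" if "k' \<le> j" "j < k" for j
  proof (rule ccontr)
    assume "\<not> R x (ys ! j)"
    then have "R (ys ! j) x" "j \<noteq> k'" using total[of j] k k' that by auto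
    then have "contains_3142 R (ys @ [x])"
      unfolding contains_3142_def using that k k' blocks[of k' k]
      by (intro exI[of _ k'] exI[of _ j] exI[of _ k] exI[of _ ?n]) (auto simp: nth_append)
    with avoids show False ..
  qed
  have "0 < k'"
    using after[of i1] below R by (cases "k' = 0") auto
  moreover have "R ((ys @ [x]) ! i) ((ys @ [x]) ! j)"
    if ij: "i < k'" "k' \<le> j" "j < length (ys @ [x])" for i j
  proof -
    consider "j < k" | "k \<le> j" "j < ?n" | "j = ?n"
      using ij(3) by (cases "j < k"; cases "j < ?n") auto
    then show ?thesis
    proof cases
      case 1
      then show ?thesis using before[of i] after[of j] ij k R by (auto simp: nth_append)
    next
      case 2
      then show ?thesis using blocks[of i j] ij k' by (simp add: nth_append)
    next
      case 3
      then show ?thesis using before ij by (simp add: nth_append)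
    qed
  qed
  ultimately show ?thesis
    using k k' unfolding splits_at_def by auto
qed

lemma splits_at_snoc:
  assumes R: "R = (<) \<or> R = (>)"
    and distinct: "distinct (ys @ [x])" and avoids: "\<not> contains_3142 R (ys @ [x])"
    and split: "splits_at R ys k"
  shows "\<exists>k. splits_at (<) (ys @ [x]) k \<or> splits_at (>) (ys @ [x]) k"
proof -
  let ?n = "length ys"
  have k: "0 < k" "k < ?n"
    and blocks: "\<And>i j. i < k \<Longrightarrow> k \<le> j \<Longrightarrow> j < ?n \<Longrightarrow> R (ys ! i) (ys ! j)"
    using split unfolding splits_at_def by auto
  have total: "R (ys ! i) x \<or> R x (ys ! i)" if "i < ?n" for i
    using snoc_comparable[OF R distinct that] .
  consider "\<forall>i<k. R (ys ! i) x" | "\<forall>i<k. R x (ys ! i)"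
    | i0 i1 where "i0 < k" "R x (ys ! i0)" "i1 < k" "R (ys ! i1) x"
    using total k by (meson order.strict_trans)
  then have "\<exists>k'. splits_at R (ys @ [x]) k' \<or> splits_at (\<lambda>a b. R b a) (ys @ [x]) k'"
  proof cases
    case 1
    then have "splits_at R (ys @ [x]) k"
      using k blocks unfolding splits_at_def by (auto simp: nth_append)
    then show ?thesis by blast
  next
    case 2
    have "R x (ys ! j)" if "j < ?n" for j
      using 2 blocks[of 0 j] k that R by (cases "j < k") auto
    then have "splits_at (\<lambda>a b. R b a) (ys @ [x]) ?n"
      using k unfolding splits_at_def by (auto simp: nth_append)
    then show ?thesis by blast
  next
    case 3
    then show ?thesis
      using splits_at_snoc_interleaved[OF R distinct avoids split] by blast
  qed
  then show ?thesis using R by auto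
qed

lemma splits_at_exists:
  "distinct xs \<Longrightarrow> separable xs \<Longrightarrow> 2 \<le> length xs \<Longrightarrow>
    \<exists>k. splits_at (<) xs k \<or> splits_at (>) xs k"
proof (induction xs rule: rev_induct)
  case Nil
  then show ?case by simp
next
  case (snoc x ys)
  show ?case
  proof (cases "length ys = 1")
    case True
    then obtain y where "ys = [y]" by (metis length_0_conv length_Suc_conv One_nat_def)
    with snoc.prems have "splits_at (<) (ys @ [x]) 1 \<or> splits_at (>) (ys @ [x]) 1"
      unfolding splits_at_def by (auto simp: nth_append less_Suc_eq)
    then show ?thesis by blast
  next
    case False
    moreover have "separable ys"
      using separable_take[OF snoc.prems(2), of "length ys"] by simp
    ultimately obtain k where "splits_at (<) ys k \<or> splits_at (>) ys k"
      using snoc by auto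
    moreover have "\<not> contains_3142 (<) (ys @ [x])" "\<not> contains_3142 (>) (ys @ [x])"
      using snoc.prems(2) unfolding separable_def by auto
    ultimately show ?thesis
      using splits_at_snoc[of "(<)"] splits_at_snoc[of "(>)"] snoc.prems(1) by blast
  qed
qed

lemma not_splits_at_both:
  assumes "splits_at (<) xs k" "splits_at (>) xs k'"
  shows False
proof -
  have "xs ! 0 < xs ! max k k'" "xs ! 0 > xs ! max k k'"
    using assms unfolding splits_at_def by auto
  then show False by simp
qed

lemma des_Nil [simp]: "des [] = 0"
  unfolding des_def by simp

lemma des_Cons: "des (x # xs) = des xs + (if xs \<noteq> [] \<and> hd xs < x then 1 else 0)"
proof -
  let ?D = "\<lambda>ys. {i. i + 1 < length ys \<and> ys ! (i + 1) < ys ! i}"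
  have "?D (x # xs) = (if xs \<noteq> [] \<and> hd xs < x then {0} else {}) \<union> Suc ` ?D xs"
  proof (rule set_eqI)
    fix i
    show "i \<in> ?D (x # xs) \<longleftrightarrow> i \<in> (if xs \<noteq> [] \<and> hd xs < x then {0} else {}) \<union> Suc ` ?D xs"
      by (cases i) (auto simp: hd_conv_nth)
  qed
  moreover have "finite (?D xs)"
    by (rule finite_subset[of _ "{..<length xs}"]) auto
  ultimately show ?thesis
    unfolding des_def by (simp add: card_image)
qed

lemma des_append:
  "des (xs @ ys) = des xs + des ys + (if xs \<noteq> [] \<and> ys \<noteq> [] \<and> hd ys < last xs then 1 else 0)"
  by (induction xs) (auto simp: des_Cons hd_append)

lemma des_map_mono:
  assumes "\<forall>a\<in>set xs. \<forall>b\<in>set xs. f a < f b \<longleftrightarrow> a < b"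
  shows "des (map f xs) = des xs"
  unfolding des_def using assms by (auto simp: nth_mem intro!: arg_cong[where f = card])

lemma des_map_antimono:
  assumes "distinct xs" and "\<forall>a\<in>set xs. \<forall>b\<in>set xs. f a < f b \<longleftrightarrow> b < a"
  shows "des (map f xs) + des xs = length xs - 1"
proof -
  let ?A = "{i. i + 1 < length xs \<and> xs ! i < xs ! (i + 1)}"
  let ?D = "{i. i + 1 < length xs \<and> xs ! (i + 1) < xs ! i}"
  have asc: "des (map f xs) = card ?A"
    unfolding des_def using assms(2) by (auto simp: nth_mem intro!: arg_cong[where f = card])
  have cover: "?A \<union> ?D = {..<length xs - 1}"
  proof (intro equalityI subsetI)
    fix i assume "i \<in> {..<length xs - 1}"
    then have "i + 1 < length xs" by simp
    moreover have "xs ! i \<noteq> xs ! (i + 1)"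
      using assms(1) calculation by (simp add: nth_eq_iff_index_eq)
    ultimately show "i \<in> ?A \<union> ?D" by auto
  qed auto
  have "finite ?A" "finite ?D"
    by (rule finite_subset[of _ "{..<length xs}"]; auto)+
  then have "card ?A + card ?D = card (?A \<union> ?D)"
    by (simp add: card_Un_disjoint disjoint_iff)
  also have "\<dots> = length xs - 1"
    unfolding cover by simp
  finally show ?thesis
    unfolding asc unfolding des_def .
qed

lemma perms_length: "xs \<in> perms n \<Longrightarrow> length xs = n"
  unfolding perms_def by (metis (mono_tags) card_atLeastAtMost diff_Suc_1 distinct_card mem_Collect_eq)

lemma finite_perms: "finite (perms n)"
proof (rule finite_subset)
  show "perms n \<subseteq> {xs. set xs \<subseteq> {1..n} \<and> length xs = n}"
    using perms_length unfolding perms_def by auto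
qed (rule finite_lists_length_eq[OF finite_atLeastAtMost])

lemma finite_avoid_perms: "finite (avoid_perms n)"
  using finite_perms by (rule finite_subset[rotated]) (auto simp: avoid_perms_def)

definition direct_sum :: "nat list \<Rightarrow> nat list \<Rightarrow> nat list" where
  "direct_sum a b = a @ map (\<lambda>v. v + length a) b"

lemma direct_sum_perms:
  assumes "a \<in> perms k" "b \<in> perms m"
  shows "direct_sum a b \<in> perms (k + m)"
proof -
  have "(\<lambda>v. v + k) ` {1..m} = {k+1..k+m}"
    by (auto simp: image_iff intro!: bexI[of _ "_ - k"])
  then show ?thesis
    using assms perms_length[OF assms(1)] unfolding perms_def direct_sum_def
    by (auto simp: distinct_map inj_on_def)
qed

lemma separable_direct_sum:
  assumes "a \<in> perms k" "b \<in> perms m" "separable a" "separable b"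
  shows "separable (direct_sum a b)"
  unfolding direct_sum_def
proof (rule separable_append)
  show "separable (map (\<lambda>v. v + length a) b)"
    using assms(4) by (subst separable_map_mono) auto
  show "\<forall>x\<in>set a. \<forall>y\<in>set (map (\<lambda>v. v + length a) b). x < y"
    using assms(1,2) perms_length[OF assms(1)] unfolding perms_def by auto
qed (fact assms(3))

lemma des_direct_sum:
  assumes "a \<in> perms k" "b \<in> perms m"
  shows "des (direct_sum a b) = des a + des b"
proof -
  have "des (map (\<lambda>v. v + length a) b) = des b"
    by (rule des_map_mono) auto
  moreover have "last a < hd b + length a" if "a \<noteq> []" "b \<noteq> []"
  proof -
    have "last a \<in> {1..k}" "hd b \<in> {1..m}"
      using assms that last_in_set hd_in_set unfolding perms_def by blast+
    then show ?thesis using perms_length[OF assms(1)] by auto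
  qed
  ultimately show ?thesis
    unfolding direct_sum_def des_append by (auto simp: hd_map)
qed

lemma splits_at_direct_sum:
  assumes "a \<in> perms k" "b \<in> perms m" "0 < k" "0 < m"
  shows "splits_at (<) (direct_sum a b) k"
proof -
  have "direct_sum a b ! i < direct_sum a b ! j" if "i < k" "k \<le> j" "j < k + m" for i j
  proof -
    have "a ! i \<le> k" "1 \<le> b ! (j - k)"
      using assms(1,2) that perms_length[OF assms(1)] perms_length[OF assms(2)]
      unfolding perms_def by (auto dest: nth_mem)
    then show ?thesis
      using that perms_length[OF assms(1)] perms_length[OF assms(2)]
      unfolding direct_sum_def by (auto simp: nth_append)
  qed
  then show ?thesis
    using assms perms_length[OF assms(1)] perms_length[OF assms(2)]
    unfolding splits_at_def direct_sum_def by auto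
qed

lemma splits_at_take:
  "splits_at R xs k \<Longrightarrow> k < m \<Longrightarrow> splits_at R (take m xs) k"
  unfolding splits_at_def by auto

lemma splits_at_of_take:
  assumes outer: "splits_at R xs k" and inner: "splits_at R (take k xs) j"
  shows "splits_at R xs j"
  unfolding splits_at_def
proof (intro conjI allI impI)
  have k: "k < length xs" and j: "0 < j" "j < k"
    using outer inner unfolding splits_at_def by auto
  then show "0 < j" "j < length xs" by auto
  fix i q assume "i < j" "j \<le> q \<and> q < length xs"
  then show "R (xs ! i) (xs ! q)"
    using outer inner j k unfolding splits_at_def by (cases "q < k") auto
qed

lemma splits_at_less_values:
  assumes "xs \<in> perms n" "splits_at (<) xs k"
  shows "set (take k xs) = {1..k}" "set (drop k xs) = {k+1..n}"
proof -
  let ?T = "set (take k xs)" and ?D = "set (drop k xs)"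
  have k: "k < n" and len: "length xs = n"
    using assms perms_length unfolding splits_at_def by auto
  have distinct: "distinct (take k xs @ drop k xs)" and "set (take k xs @ drop k xs) = {1..n}"
    using assms(1) unfolding perms_def by simp_all
  then have cover: "?T \<union> ?D = {1..n}" and disjoint: "?T \<inter> ?D = {}" and card_T: "card ?T = k"
    using k len by (auto simp: distinct_card simp del: append_take_drop_id)
  have less: "t < d" if "t \<in> ?T" "d \<in> ?D" for t d
    using assms(2) that unfolding splits_at_def by (auto simp: in_set_conv_nth)
  have "?T \<subseteq> {1..k}"
  proof
    fix t assume t: "t \<in> ?T"
    have "w \<in> ?T" if w: "w \<in> {1..t}" for w
    proof -
      have "t \<le> n" using t cover by auto
      then have "w \<in> ?T \<union> ?D" using w cover by auto
      moreover have "w \<notin> ?D" using less[OF t] w by force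
      ultimately show ?thesis by blast
    qed
    then have "{1..t} \<subseteq> ?T" ..
    then have "card {1..t} \<le> k"
      using card_T card_mono by (metis finite_set)
    then show "t \<in> {1..k}"
      using t cover by auto
  qed
  then show T: "?T = {1..k}"
    using card_T by (intro card_subset_eq) auto
  have "?D = {1..n} - ?T"
    using cover disjoint by auto
  also have "\<dots> = {k+1..n}"
    unfolding T by auto
  finally show "?D = {k+1..n}" .
qed

lemma direct_sum_split:
  assumes perm: "xs \<in> perms n" and split: "splits_at (<) xs k"
  shows "take k xs \<in> perms k" "map (\<lambda>v. v - k) (drop k xs) \<in> perms (n - k)"
    "xs = direct_sum (take k xs) (map (\<lambda>v. v - k) (drop k xs))"
proof -
  note blocks = splits_at_less_values[OF perm split]
  have k: "k < n"
    using split perms_length[OF perm] unfolding splits_at_def by auto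
  show "take k xs \<in> perms k"
    using perm blocks(1) unfolding perms_def by auto
  have "inj_on (\<lambda>v. v - k) (set (drop k xs))"
    using blocks unfolding inj_on_def by auto
  moreover have "(\<lambda>v. v - k) ` {k+1..n} = {1..n-k}"
    by (auto simp: image_iff intro!: bexI[of _ "_ + k"])
  ultimately show "map (\<lambda>v. v - k) (drop k xs) \<in> perms (n - k)"
    using perm blocks unfolding perms_def by (auto simp: distinct_map)
  have "map (\<lambda>v. v + k) (map (\<lambda>v. v - k) (drop k xs)) = drop k xs"
    unfolding map_map o_def by (rule map_idI) (use blocks in auto)
  then show "xs = direct_sum (take k xs) (map (\<lambda>v. v - k) (drop k xs))"
    unfolding direct_sum_def using k perms_length[OF perm] by simp
qed

definition decomposable :: "(nat \<Rightarrow> nat \<Rightarrow> bool) \<Rightarrow> nat \<Rightarrow> nat list set" where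
  "decomposable R n = {xs \<in> avoid_perms n. \<exists>k. splits_at R xs k}"

definition indecomposable :: "(nat \<Rightarrow> nat \<Rightarrow> bool) \<Rightarrow> nat \<Rightarrow> nat list set" where
  "indecomposable R n = {xs \<in> avoid_perms n. \<forall>k. \<not> splits_at R xs k}"

lemma decomposable_direct_sum:
  assumes "xs \<in> decomposable (<) n"
  obtains k a b where "k \<in> {1..<n}" "a \<in> indecomposable (<) k" "b \<in> avoid_perms (n - k)"
    "xs = direct_sum a b"
proof -
  have perm: "xs \<in> perms n" and sep: "separable xs" and ex: "\<exists>k. splits_at (<) xs k"
    using assms unfolding decomposable_def avoid_perms_eq by auto
  define k where "k = (LEAST k. splits_at (<) xs k)"
  have split: "splits_at (<) xs k"
    using ex LeastI_ex unfolding k_def by metis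
  have k: "0 < k" "k < n"
    using split perms_length[OF perm] unfolding splits_at_def by auto
  note parts = direct_sum_split[OF perm split]
  have "\<not> splits_at (<) (take k xs) j" for j
  proof
    assume prefix_split: "splits_at (<) (take k xs) j"
    then have "j < k"
      using perms_length[OF parts(1)] unfolding splits_at_def by auto
    moreover have "splits_at (<) xs j"
      using splits_at_of_take[OF split prefix_split] .
    ultimately show False
      using not_less_Least unfolding k_def by blast
  qed
  then have "take k xs \<in> indecomposable (<) k"
    using parts(1) separable_take[OF sep] unfolding indecomposable_def avoid_perms_eq by auto
  moreover have "separable (map (\<lambda>v. v - k) (drop k xs))"
    by (subst separable_map_mono)
      (use splits_at_less_values[OF perm split] separable_drop[OF sep] in auto)
  then have "map (\<lambda>v. v - k) (drop k xs) \<in> avoid_perms (n - k)"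
    using parts(2) unfolding avoid_perms_eq by auto
  ultimately show ?thesis
    using that[of k] k parts(3) by auto
qed

text \<open>The empty permutation is indecomposable, hence the hypothesis \<open>0 < k\<close>.\<close>

lemma direct_sum_prefix_length:
  assumes a: "a \<in> indecomposable (<) k" and b: "b \<in> avoid_perms m" and "0 < k" "0 < m"
    and a': "a' \<in> indecomposable (<) k'" and eq: "direct_sum a b = direct_sum a' b'"
  shows "\<not> k < k'"
proof
  assume "k < k'"
  have "a \<in> perms k" "b \<in> perms m" "a' \<in> perms k'"
    using a b a' unfolding indecomposable_def avoid_perms_def by auto
  then have "splits_at (<) (take k' (direct_sum a b)) k"
    using splits_at_take[OF splits_at_direct_sum] \<open>0 < k\<close> \<open>0 < m\<close> \<open>k < k'\<close> by blast
  moreover have "take k' (direct_sum a' b') = a'"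
    using perms_length[OF \<open>a' \<in> perms k'\<close>] unfolding direct_sum_def by simp
  ultimately show False
    using a' eq unfolding indecomposable_def by auto
qed

lemma inj_on_direct_sum:
  "inj_on (\<lambda>(a, b). direct_sum a b) (\<Union>k\<in>{1..<n}. indecomposable (<) k \<times> avoid_perms (n - k))"
proof (rule inj_onI, clarify)
  fix k a b k' a' b'
  assume k: "k \<in> {1..<n}" "k' \<in> {1..<n}"
    and a: "a \<in> indecomposable (<) k" "a' \<in> indecomposable (<) k'"
    and b: "b \<in> avoid_perms (n - k)" "b' \<in> avoid_perms (n - k')"
    and eq: "direct_sum a b = direct_sum a' b'"
  have "k = k'"
    using direct_sum_prefix_length[OF a(1) b(1) _ _ a(2) eq]
      direct_sum_prefix_length[OF a(2) b(2) _ _ a(1) eq[symmetric]] k by force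
  then have "length a = length a'"
    using a unfolding indecomposable_def avoid_perms_def by (auto dest: perms_length)
  then show "a = a' \<and> b = b'"
    using eq unfolding direct_sum_def by (auto dest: map_inj_on[of "\<lambda>v. v + length a'"] simp: inj_on_def)
qed

lemma bij_betw_direct_sum:
  "bij_betw (\<lambda>(a, b). direct_sum a b)
     (\<Union>k\<in>{1..<n}. indecomposable (<) k \<times> avoid_perms (n - k)) (decomposable (<) n)"
proof (rule bij_betw_imageI[OF inj_on_direct_sum], intro equalityI subsetI)
  fix xs assume "xs \<in> decomposable (<) n"
  then show "xs \<in> (\<lambda>(a, b). direct_sum a b) `
      (\<Union>k\<in>{1..<n}. indecomposable (<) k \<times> avoid_perms (n - k))"
    by (elim decomposable_direct_sum) force
next
  fix xs assume "xs \<in> (\<lambda>(a, b). direct_sum a b) `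
      (\<Union>k\<in>{1..<n}. indecomposable (<) k \<times> avoid_perms (n - k))"
  then obtain k a b where k: "k \<in> {1..<n}" and a: "a \<in> indecomposable (<) k"
    and b: "b \<in> avoid_perms (n - k)" and xs: "xs = direct_sum a b"
    by auto
  have perm: "a \<in> perms k" "b \<in> perms (n - k)" and sep: "separable a" "separable b"
    using a b unfolding indecomposable_def avoid_perms_eq by auto
  have "direct_sum a b \<in> perms (k + (n - k))"
    using direct_sum_perms[OF perm] .
  moreover have "separable (direct_sum a b)"
    using separable_direct_sum[OF perm sep] .
  moreover have "splits_at (<) (direct_sum a b) k"
    using splits_at_direct_sum[OF perm] k by simp
  ultimately show "xs \<in> decomposable (<) n"
    unfolding xs decomposable_def avoid_perms_eq using k by auto
qed

lemma sum_decomposable: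
  "(\<Sum>xs\<in>decomposable (<) n. f xs) =
     (\<Sum>k=1..<n. \<Sum>a\<in>indecomposable (<) k. \<Sum>b\<in>avoid_perms (n - k). f (direct_sum a b))"
proof -
  have finite: "finite (indecomposable (<) k \<times> avoid_perms (n - k))" for k
    using finite_avoid_perms[of k] finite_avoid_perms[of "n - k"]
    unfolding indecomposable_def by (auto intro: finite_subset)
  have disjoint: "(indecomposable (<) i \<times> avoid_perms (n - i))
      \<inter> (indecomposable (<) j \<times> avoid_perms (n - j)) = {}"
    if "i \<noteq> j" for i j
    using that unfolding indecomposable_def avoid_perms_def by (auto dest: perms_length)
  have "(\<Sum>xs\<in>decomposable (<) n. f xs) =
      (\<Sum>p\<in>(\<Union>k\<in>{1..<n}. indecomposable (<) k \<times> avoid_perms (n - k)).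
        f (case p of (a, b) \<Rightarrow> direct_sum a b))"
    by (rule sum.reindex_bij_betw[OF bij_betw_direct_sum, symmetric])
  also have "\<dots> = (\<Sum>k=1..<n. \<Sum>p\<in>indecomposable (<) k \<times> avoid_perms (n - k).
      f (case p of (a, b) \<Rightarrow> direct_sum a b))"
    by (rule sum.UNION_disjoint) (use finite disjoint in auto)
  also have "\<dots> = (\<Sum>k=1..<n. \<Sum>a\<in>indecomposable (<) k. \<Sum>b\<in>avoid_perms (n - k). f (direct_sum a b))"
    by (simp add: sum.cartesian_product split_def)
  finally show ?thesis .
qed

definition complement :: "nat list \<Rightarrow> nat list" where
  "complement xs = map (\<lambda>v. Suc (length xs) - v) xs"

lemma complement_antimono:
  assumes "xs \<in> perms n"
  shows "\<forall>a\<in>set xs. \<forall>b\<in>set xs. Suc (length xs) - a < Suc (length xs) - b \<longleftrightarrow> b < a"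
  using assms perms_length[OF assms] unfolding perms_def by auto

lemma complement_perms:
  assumes "xs \<in> perms n"
  shows "complement xs \<in> perms n"
proof -
  have "inj_on (\<lambda>v. Suc n - v) {1..n}"
    by (auto simp: inj_on_def)
  moreover have "(\<lambda>v. Suc n - v) ` {1..n} = {1..n}"
  proof (intro equalityI subsetI)
    fix y assume "y \<in> {1..n}"
    then show "y \<in> (\<lambda>v. Suc n - v) ` {1..n}"
      by (intro image_eqI[of _ _ "Suc n - y"]) auto
  qed auto
  ultimately show ?thesis
    using assms perms_length[OF assms] unfolding perms_def complement_def
    by (auto simp: distinct_map)
qed

lemma complement_complement:
  assumes "xs \<in> perms n"
  shows "complement (complement xs) = xs"
  using assms perms_length[OF assms] unfolding complement_def perms_def
  by (auto intro!: map_idI)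

lemma inj_on_complement: "inj_on complement (perms n)"
  by (metis complement_complement inj_onI)

lemma separable_complement:
  assumes "xs \<in> perms n"
  shows "separable (complement xs) \<longleftrightarrow> separable xs"
  unfolding complement_def using separable_map_antimono[OF complement_antimono[OF assms]] .

lemma splits_at_complement:
  assumes "xs \<in> perms n"
  shows "splits_at (>) (complement xs) k \<longleftrightarrow> splits_at (<) xs k"
proof -
  have "complement xs ! i > complement xs ! j \<longleftrightarrow> xs ! i < xs ! j"
    if "i < length xs" "j < length xs" for i j
    using complement_antimono[OF assms] that unfolding complement_def by (auto simp: nth_mem)
  then show ?thesis
    unfolding splits_at_def by (auto simp: complement_def)
qed

lemma des_complement:
  assumes "xs \<in> perms n"
  shows "des (complement xs) + des xs = n - 1"
  using des_map_antimono[OF _ complement_antimono[OF assms]] assms perms_length[OF assms]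
  unfolding complement_def perms_def by auto

lemma complement_image:
  assumes "\<And>xs. xs \<in> perms n \<Longrightarrow> Q (complement xs) \<longleftrightarrow> P xs"
  shows "complement ` {xs \<in> perms n. P xs} = {xs \<in> perms n. Q xs}"
proof (intro equalityI subsetI)
  fix ys assume "ys \<in> {xs \<in> perms n. Q xs}"
  then have "complement ys \<in> {xs \<in> perms n. P xs}" "ys = complement (complement ys)"
    using assms[of "complement ys"] complement_perms complement_complement by auto
  then show "ys \<in> complement ` {xs \<in> perms n. P xs}" by blast
qed (use assms complement_perms in auto)

lemma complement_avoid_perms: "complement ` avoid_perms n = avoid_perms n"
  unfolding avoid_perms_eq by (rule complement_image) (rule separable_complement)

lemma complement_decomposable: "complement ` decomposable (<) n = decomposable (>) n"
proof -
  have "separable (complement xs) \<and> (\<exists>k. splits_at (>) (complement xs) k) \<longleftrightarrow>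
      separable xs \<and> (\<exists>k. splits_at (<) xs k)" if "xs \<in> perms n" for xs
    using separable_complement[OF that] splits_at_complement[OF that] by simp
  then show ?thesis
    unfolding decomposable_def avoid_perms_eq mem_Collect_eq conj_assoc by (rule complement_image)
qed

lemma complement_indecomposable: "complement ` indecomposable (<) n = indecomposable (>) n"
proof -
  have "separable (complement xs) \<and> (\<forall>k. \<not> splits_at (>) (complement xs) k) \<longleftrightarrow>
      separable xs \<and> (\<forall>k. \<not> splits_at (<) xs k)" if "xs \<in> perms n" for xs
    using separable_complement[OF that] splits_at_complement[OF that] by simp
  then show ?thesis
    unfolding indecomposable_def avoid_perms_eq mem_Collect_eq conj_assoc by (rule complement_image)
qed

definition des_poly :: "nat list set \<Rightarrow> int poly" where
  "des_poly A = (\<Sum>xs\<in>A. monom 1 (des xs))"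

lemma S_eq_des_poly: "S n = des_poly (avoid_perms n)"
  unfolding S_def des_poly_def ..

lemma finite_decomposable: "finite (decomposable R n)"
  using finite_avoid_perms by (rule finite_subset[rotated]) (auto simp: decomposable_def)

lemma finite_indecomposable: "finite (indecomposable R n)"
  using finite_avoid_perms by (rule finite_subset[rotated]) (auto simp: indecomposable_def)

lemma S_eq_decomposable_indecomposable:
  "S n = des_poly (decomposable R n) + des_poly (indecomposable R n)"
proof -
  have "avoid_perms n = decomposable R n \<union> indecomposable R n"
    "decomposable R n \<inter> indecomposable R n = {}"
    unfolding decomposable_def indecomposable_def by auto
  then show ?thesis
    unfolding S_eq_des_poly des_poly_def
    by (simp add: sum.union_disjoint finite_decomposable finite_indecomposable)
qed

lemma S_eq_decomposable:
  assumes "2 \<le> n"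
  shows "S n = des_poly (decomposable (<) n) + des_poly (decomposable (>) n)"
proof -
  have "avoid_perms n \<subseteq> decomposable (<) n \<union> decomposable (>) n"
  proof
    fix xs assume xs: "xs \<in> avoid_perms n"
    then have "distinct xs" "separable xs" "2 \<le> length xs"
      using assms perms_length unfolding avoid_perms_eq perms_def by auto
    then show "xs \<in> decomposable (<) n \<union> decomposable (>) n"
      using xs splits_at_exists unfolding decomposable_def by blast
  qed
  then have "avoid_perms n = decomposable (<) n \<union> decomposable (>) n"
    unfolding decomposable_def by auto
  moreover have "decomposable (<) n \<inter> decomposable (>) n = {}"
    unfolding decomposable_def using not_splits_at_both by blast
  ultimately show ?thesis
    unfolding S_eq_des_poly des_poly_def
    by (simp add: sum.union_disjoint finite_decomposable)
qed

lemma decomposable_trivial: "n \<le> 1 \<Longrightarrow> decomposable R n = {}"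
  unfolding decomposable_def avoid_perms_def splits_at_def by (auto dest: perms_length)

lemma S_1: "S 1 = 1"
proof -
  have "xs = [1]" if xs: "xs \<in> perms 1" for xs
  proof -
    obtain x where "xs = [x]"
      using perms_length[OF xs] by (auto simp: length_Suc_conv)
    then show ?thesis using xs unfolding perms_def by simp
  qed
  then have "perms 1 = {[1]}"
    unfolding perms_def by auto
  moreover have "separable [1]"
    unfolding separable_def contains_3142_def by auto
  ultimately have "avoid_perms 1 = {[1]}"
    unfolding avoid_perms_eq by auto
  then show ?thesis
    unfolding S_def des_def by simp
qed

lemma direct_sum_recurrence:
  "des_poly (decomposable (<) n) = (\<Sum>k=1..<n. des_poly (indecomposable (<) k) * S (n - k))"
proof -
  have "des_poly (decomposable (<) n) =
      (\<Sum>k=1..<n. \<Sum>a\<in>indecomposable (<) k. \<Sum>b\<in>avoid_perms (n - k). monom 1 (des a) * monom 1 (des b))"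
    unfolding des_poly_def sum_decomposable
    by (intro sum.cong refl) (auto simp: des_direct_sum mult_monom indecomposable_def avoid_perms_def)
  then show ?thesis
    unfolding S_eq_des_poly des_poly_def by (simp add: sum_product)
qed

lemma des_complement_direct_sum:
  assumes "a \<in> perms k" "b \<in> perms m" "0 < k" "0 < m"
  shows "des (complement (direct_sum a b)) = des (complement a) + des (complement b) + 1"
  using des_complement[OF direct_sum_perms[OF assms(1,2)]] des_direct_sum[OF assms(1,2)]
    des_complement[OF assms(1)] des_complement[OF assms(2)] assms(3,4)
  by linarith

lemma des_poly_complement:
  assumes "A \<subseteq> perms n"
  shows "des_poly (complement ` A) = (\<Sum>xs\<in>A. monom 1 (des (complement xs)))"
  unfolding des_poly_def using inj_on_subset[OF inj_on_complement assms]
  by (simp add: sum.reindex)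

lemma skew_sum_recurrence:
  "des_poly (decomposable (>) n) = [:0, 1:] * (\<Sum>k=1..<n. des_poly (indecomposable (>) k) * S (n - k))"
proof -
  have perms: "decomposable R n \<subseteq> perms n" "indecomposable R n \<subseteq> perms n" "avoid_perms n \<subseteq> perms n"
    for R n unfolding decomposable_def indecomposable_def avoid_perms_def by auto
  have "des_poly (decomposable (>) n) = (\<Sum>xs\<in>decomposable (<) n. monom 1 (des (complement xs)))"
    unfolding complement_decomposable[symmetric] by (rule des_poly_complement[OF perms(1)])
  also have "\<dots> = (\<Sum>k=1..<n. \<Sum>a\<in>indecomposable (<) k. \<Sum>b\<in>avoid_perms (n - k).
      [:0, 1:] * (monom 1 (des (complement a)) * monom 1 (des (complement b))))"
    unfolding sum_decomposable
  proof (intro sum.cong refl)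
    fix k a b assume "k \<in> {1..<n}" "a \<in> indecomposable (<) k" "b \<in> avoid_perms (n - k)"
    then have "a \<in> perms k" "b \<in> perms (n - k)" "0 < k" "0 < n - k"
      using perms(2)[of "(<)" k] perms(3)[of "n - k"] by auto
    then have "des (complement (direct_sum a b)) = Suc (des (complement a) + des (complement b))"
      by (simp add: des_complement_direct_sum)
    then show "monom 1 (des (complement (direct_sum a b))) =
        [:0, 1:] * (monom 1 (des (complement a)) * monom (1::int) (des (complement b)))"
      by (simp add: mult_monom monom_Suc)
  qed
  also have "\<dots> = [:0, 1:] * (\<Sum>k=1..<n. des_poly (indecomposable (>) k) * S (n - k))"
  proof -
    have skew: "des_poly (indecomposable (>) k) =
        (\<Sum>a\<in>indecomposable (<) k. monom 1 (des (complement a)))" for k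
      unfolding complement_indecomposable[symmetric] by (rule des_poly_complement[OF perms(2)])
    have avoid: "S m = (\<Sum>b\<in>avoid_perms m. monom 1 (des (complement b)))" for m
      using des_poly_complement[OF perms(3), of m] unfolding complement_avoid_perms S_eq_des_poly .
    show ?thesis
      unfolding skew avoid sum_product by (simp only: sum_distrib_left)
  qed
  finally show ?thesis .
qed

lemma indecomposable_eq_opposite_decomposable:
  assumes "2 \<le> n"
  shows "des_poly (indecomposable (<) n) = des_poly (decomposable (>) n)"
    and "des_poly (indecomposable (>) n) = des_poly (decomposable (<) n)"
  using S_eq_decomposable[OF assms] S_eq_decomposable_indecomposable[of n "(<)"]
    S_eq_decomposable_indecomposable[of n "(>)"] by simp_all

text \<open>Coefficient 0 is forced to be 0, as in \<open>Sgf\<close>; note that \<open>S 0 = 1\<close> counts the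
  empty permutation.\<close>

definition gf :: "(nat \<Rightarrow> 'a::zero) \<Rightarrow> 'a fps" where
  "gf a = Abs_fps (\<lambda>n. if n = 0 then 0 else a n)"

lemma gf_nth [simp]: "gf a $ n = (if n = 0 then 0 else a n)"
  unfolding gf_def by simp

lemma fps_mult_nth_no_constant:
  fixes f g :: "'a::semiring_0 fps"
  assumes "f $ 0 = 0" "g $ 0 = 0"
  shows "(f * g) $ n = (\<Sum>k=1..<n. f $ k * g $ (n - k))"
proof (cases "n = 0")
  case False
  then have "{0..n} = insert 0 (insert n {1..<n})" by auto
  then show ?thesis using assms False by (simp add: fps_mult_nth)
qed (simp add: fps_mult_nth assms)

lemma gf_mult_nth:
  fixes a b :: "nat \<Rightarrow> 'a::semiring_0"
  shows "(gf a * gf b) $ n = (\<Sum>k=1..<n. a k * b (n - k))"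
  by (simp add: fps_mult_nth_no_constant)

lemma gf_decomposable_less:
  "gf (\<lambda>n. des_poly (decomposable (<) n)) = gf (\<lambda>n. des_poly (indecomposable (<) n)) * gf S"
  by (rule fps_ext) (simp add: gf_mult_nth direct_sum_recurrence)

lemma gf_decomposable_greater:
  "gf (\<lambda>n. des_poly (decomposable (>) n)) =
     fps_const [:0, 1:] * (gf (\<lambda>n. des_poly (indecomposable (>) n)) * gf S)"
  by (rule fps_ext) (simp add: gf_mult_nth skew_sum_recurrence)

lemma des_poly_empty [simp]: "des_poly {} = 0"
  unfolding des_poly_def by simp

lemma des_poly_indecomposable_1: "des_poly (indecomposable R 1) = 1"
  using S_eq_decomposable_indecomposable[of 1 R] unfolding S_1 decomposable_trivial[OF order_refl] by simp

lemma gf_indecomposable_less: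
  "gf (\<lambda>n. des_poly (indecomposable (<) n)) = fps_X + gf (\<lambda>n. des_poly (decomposable (>) n))"
proof (rule fps_ext)
  fix n :: nat
  consider "n = 0" | "n = 1" | "2 \<le> n" by linarith
  then show "gf (\<lambda>n. des_poly (indecomposable (<) n)) $ n
      = (fps_X + gf (\<lambda>n. des_poly (decomposable (>) n))) $ n"
    by cases (simp_all add: des_poly_indecomposable_1[unfolded One_nat_def] indecomposable_eq_opposite_decomposable
        decomposable_trivial fps_X_nth)
qed

lemma gf_indecomposable_greater:
  "gf (\<lambda>n. des_poly (indecomposable (>) n)) = fps_X + gf (\<lambda>n. des_poly (decomposable (<) n))"
proof (rule fps_ext)
  fix n :: nat
  consider "n = 0" | "n = 1" | "2 \<le> n" by linarith
  then show "gf (\<lambda>n. des_poly (indecomposable (>) n)) $ n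
      = (fps_X + gf (\<lambda>n. des_poly (decomposable (<) n))) $ n"
    by cases (simp_all add: des_poly_indecomposable_1[unfolded One_nat_def] indecomposable_eq_opposite_decomposable
        decomposable_trivial fps_X_nth)
qed

lemma gf_S:
  "gf S = fps_X + gf (\<lambda>n. des_poly (decomposable (<) n)) + gf (\<lambda>n. des_poly (decomposable (>) n))"
proof (rule fps_ext)
  fix n :: nat
  consider "n = 0" | "n = 1" | "2 \<le> n" by linarith
  then show "gf S $ n = (fps_X + gf (\<lambda>n. des_poly (decomposable (<) n))
      + gf (\<lambda>n. des_poly (decomposable (>) n))) $ n"
    by cases (simp_all add: S_1[unfolded One_nat_def] S_eq_decomposable decomposable_trivial fps_X_nth)
qed

lemma Sgf_equation:
  "Sgf = fps_X + fps_const [:1, 1:] * fps_X * Sgf + fps_const [:0, 1:] * fps_X * Sgf ^ 2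
     + fps_const [:0, 1:] * Sgf ^ 3"
proof -
  define t :: "int poly fps" where "t = fps_const [:0, 1:]"
  have "[:1, 1:] = 1 + [:0, 1 :: int:]"
    by (simp add: one_pCons)
  then have "fps_const [:1, 1:] = 1 + t"
    unfolding t_def by (metis fps_const_add fps_const_1_eq_1)
  moreover have "Sgf = gf S"
    unfolding Sgf_def gf_def ..
  ultimately show ?thesis
    using gf_S gf_decomposable_less gf_decomposable_greater[folded t_def]
      gf_indecomposable_less gf_indecomposable_greater
    unfolding t_def[symmetric] by algebra
qed

lemma gf_mult:
  fixes a b :: "nat \<Rightarrow> 'a::semiring_0"
  shows "gf a * gf b = gf (\<lambda>n. \<Sum>k=1..<n. a k * b (n - k))"
  by (rule fps_ext) (simp add: gf_mult_nth)

lemma Sgf_power_nth: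
  "(Sgf ^ 2) $ m = (\<Sum>k=1..<m. S k * S (m - k))"
  "(Sgf ^ 3) $ n = (\<Sum>j=1..<n. S j * (\<Sum>i=1..<n-j. S i * S (n - j - i)))"
proof -
  have Sgf: "Sgf = gf S"
    unfolding Sgf_def gf_def ..
  show "(Sgf ^ 2) $ m = (\<Sum>k=1..<m. S k * S (m - k))"
    unfolding Sgf power2_eq_square gf_mult_nth ..
  show "(Sgf ^ 3) $ n = (\<Sum>j=1..<n. S j * (\<Sum>i=1..<n-j. S i * S (n - j - i)))"
  proof -
    have cube: "Sgf ^ 3 = gf S * (gf S * gf S)"
      unfolding Sgf by (simp add: power3_eq_cube mult.assoc)
    show ?thesis
      unfolding cube gf_mult[of S S] gf_mult_nth by (simp add: diff_diff_add)
  qed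
qed

lemma S_recurrence:
  assumes n: "2 \<le> n"
  shows "S n = [:1, 1:] * S (n - 1)
            + [:0, 1:] * (\<Sum>j=1..n-2. S j * (S (n - j - 1)
                 + (\<Sum>i=1..n-j-1. S i * S (n - j - i))))"
proof -
  have "S n = Sgf $ n"
    using n unfolding Sgf_def by simp
  also have "\<dots> = [:1, 1:] * S (n - 1) + [:0, 1:] * (Sgf ^ 2) $ (n - 1) + [:0, 1:] * (Sgf ^ 3) $ n"
    using n by (subst Sgf_equation) (simp add: mult.assoc Sgf_def)
  also have "(Sgf ^ 2) $ (n - 1) = (\<Sum>j=1..n-2. S j * S (n - j - 1))"
    unfolding Sgf_power_nth using n by (intro sum.cong) auto
  also have "(Sgf ^ 3) $ n = (\<Sum>j=1..n-2. S j * (\<Sum>i=1..n-j-1. S i * S (n - j - i)))"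
  proof -
    have "{1..<n} = insert (n - 1) {1..n-2}" "n - 1 \<notin> {1..n-2}" "n - (n - 1) = 1"
      using n by auto
    then have "(Sgf ^ 3) $ n = (\<Sum>j=1..n-2. S j * (\<Sum>i=1..<n-j. S i * S (n - j - i)))"
      unfolding Sgf_power_nth by simp
    also have "\<dots> = (\<Sum>j=1..n-2. S j * (\<Sum>i=1..n-j-1. S i * S (n - j - i)))"
      by (intro sum.cong refl arg_cong2[where f = "(*)"] sum.cong) auto
    finally show ?thesis .
  qed
  finally show ?thesis
    by (simp add: distrib_left sum.distrib)
qed

theorem theorem5p10:
  shows "(\<forall>n\<ge>2. S n = [:1, 1:] * S (n - 1)
            + [:0, 1:] * (\<Sum>j=1..n-2. S j * (S (n - j - 1)
                 + (\<Sum>i=1..n-j-1. S i * S (n - j - i)))))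
    \<and> Sgf = fps_X + fps_const [:1, 1:] * fps_X * Sgf + fps_const [:0, 1:] * fps_X * Sgf ^ 2
             + fps_const [:0, 1:] * Sgf ^ 3"
  using S_recurrence Sgf_equation by blast

end
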